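(* Let $X$ be a compact metric space and $f_{1,\infty}=\{f_n\}$ an equicontinuous sequence of continuous maps $f_n:X\to X$, and let $\mu_{1,\infty}=\{\mu_n\}$ be a sequence of Borel probability measures with $f_n\mu_n=\mu_{n+1}$ for all $n$. Assume that the measures in the weak$^*$-closure of $\{\mu_n\}$ are pairwise equivalent (mutually absolutely continuous). Then the Misiurewicz class $\mathcal{E}_{\mathrm{M}}$ contains every constant sequence $\mathcal{P}_n\equiv\mathcal{P}$ where $\mathcal{P}=\{P_1,\dots,P_k\}$ is a finite Borel partition of $X$ whose members have zero boundaries with respect to the measures $\mu_n$, i.e., $\mu_n(\partial P_i)=0$.
   Context: Equicontinuity: for every $\varepsilon>0$ there is $\delta>0$ with $\varrho(f_nx,f_ny)<\varepsilon$ whenever $\varrho(x,y)<\delta$, for all $n$. Misiurewicz class $\mathcal{E}_{\mathrm{M}}$ (for the system with $X_n=X$ and measures $\mu_n$): the set of sequences $\{\mathcal{P}_n\}$ of finite Borel partitions $\mathcal{P}_n=\{P_{n,1},\dots,P_{n,k_n}\}$ of $X$ with $\sup_nk_n<\infty$ such that for every $\varepsilon>0$ there exist $\delta>0$ and compact sets $C_{n,i}\subset P_{n,i}$ with, for all $n$: (a) $\mu_n(P_{n,i}\setminus C_{n,i})\le\varepsilon$; (b) $\varrho(x,y)\ge\delta$ for all $x\in C_{n,i}$, $y\in C_{n,j}$, $i\neq j$. *)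

theory Defs
  imports "HOL-Probability.Probability"
begin

definition equicontinuous_seq :: "(nat \<Rightarrow> 'a::metric_space \<Rightarrow> 'a) \<Rightarrow> bool" where
  "equicontinuous_seq f \<longleftrightarrow>
     (\<forall>\<epsilon>>0. \<exists>\<delta>>0. \<forall>n x y. dist x y < \<delta> \<longrightarrow> dist (f n x) (f n y) < \<epsilon>)"

definition borel_prob :: "'a::topological_space measure \<Rightarrow> bool" where
  "borel_prob M \<longleftrightarrow> sets M = sets borel \<and> prob_space M"

text \<open>Weak-star closure of the set of measures mu n, n in nat, inside the space of
  Borel probability measures: nu lies in it iff every basic weak-star neighbourhood
  of nu (given by finitely many continuous functions and a tolerance) meets the set.\<close>
definition weak_star_closure :: "(nat \<Rightarrow> 'a::metric_space measure) \<Rightarrow> 'a measure set" where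
  "weak_star_closure \<mu> = {\<nu>. borel_prob \<nu> \<and>
     (\<forall>G \<epsilon>. finite G \<and> (\<forall>g\<in>G. continuous_on UNIV g) \<and> \<epsilon> > 0 \<longrightarrow>
        (\<exists>n. \<forall>g\<in>G. \<bar>(\<integral>x. g x \<partial>\<mu> n) - (\<integral>x. g x \<partial>\<nu>)\<bar> < (\<epsilon>::real)))}"

definition borel_partition :: "nat \<Rightarrow> (nat \<Rightarrow> 'a::topological_space set) \<Rightarrow> bool" where
  "borel_partition k P \<longleftrightarrow>
     (\<forall>i<k. P i \<in> sets borel) \<and>
     (\<forall>i<k. \<forall>j<k. i \<noteq> j \<longrightarrow> P i \<inter> P j = {}) \<and>
     (\<Union>i<k. P i) = UNIV"

text \<open>Misiurewicz class: sequences n \<mapsto> P n of finite Borel partitions, P n having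
  k n members P n 0, ..., P n (k n - 1).\<close>
definition misiurewicz_class ::
  "(nat \<Rightarrow> 'a::metric_space measure) \<Rightarrow> ((nat \<Rightarrow> nat) \<times> (nat \<Rightarrow> nat \<Rightarrow> 'a set)) set" where
  "misiurewicz_class \<mu> = {(k, P).
     (\<forall>n. borel_partition (k n) (P n)) \<and> bdd_above (range k) \<and>
     (\<forall>\<epsilon>>0. \<exists>\<delta>>0. \<exists>C. \<forall>n. \<forall>i<k n.
        compact (C n i) \<and> C n i \<subseteq> P n i \<and>
        measure (\<mu> n) (P n i - C n i) \<le> \<epsilon> \<and>
        (\<forall>j<k n. i \<noteq> j \<longrightarrow> (\<forall>x\<in>C n i. \<forall>y\<in>C n j. dist x y \<ge> \<delta>)))}"

end

theory Submission
  imports Defs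
begin

text \<open>
  The frontier of each \<open>P\<^sub>i\<close> is a closed set that is null for every weak-star limit point of
  the \<open>\<mu>\<^sub>n\<close>, since such a limit is equivalent to \<open>\<mu>\<^sub>0\<close>, which kills the frontier. By
  compactness of the space of probability measures (Prokhorov), the \<open>t\<close>-neighbourhoods of the
  frontiers then have \<open>\<mu>\<^sub>n\<close>-measure small uniformly in \<open>n\<close> once \<open>t\<close> is small: otherwise a weak
  limit of a subsequence along which these measures stay large would, by the portmanteau
  inequality, charge every neighbourhood of a frontier and hence the frontier itself. Removing
  these neighbourhoods from the \<open>P\<^sub>i\<close> leaves pairwise disjoint compact sets, which lie at positive
  distance from each other.

  Prokhorov's theorem is reduced to Helly's selection theorem by coding \<open>X\<close> into \<open>[0, 1]\<close> by a
  Borel injection with uniformly continuous inverse.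
\<close>

section \<open>Coding a compact metric space into the unit interval\<close>

lemma summable_ternary_series:
  fixes b :: "nat \<Rightarrow> real"
  assumes "\<And>q. \<bar>b q\<bar> \<le> 1"
  shows "summable (\<lambda>q. 2 * b q / 3 ^ Suc q)"
proof (rule summable_comparison_test)
  show "summable (\<lambda>q. 2 * (1/3::real) ^ q)"
    by (intro summable_mult summable_geometric) auto
  show "\<exists>N. \<forall>q\<ge>N. norm (2 * b q / 3 ^ Suc q) \<le> 2 * (1/3) ^ q"
  proof (intro exI allI impI)
    fix q :: nat
    show "norm (2 * b q / 3 ^ Suc q) \<le> 2 * (1/3) ^ q"
      using assms[of q] by (simp add: abs_mult power_divide field_simps)
  qed
qed

text \<open>A ternary series with digits in \<open>[-1, 1]\<close> is dominated by its first nonzero digit,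
  provided that digit is \<open>\<plusminus>1\<close>: the tail sums to at most half of its weight.\<close>
lemma ternary_series_first_digit:
  fixes d :: "nat \<Rightarrow> real"
  assumes bd: "\<And>q. \<bar>d q\<bar> \<le> 1" and zero: "\<And>q. q < p \<Longrightarrow> d q = 0" and one: "\<bar>d p\<bar> = 1"
  shows "1 / 3 ^ Suc p \<le> \<bar>\<Sum>q. 2 * d q / 3 ^ Suc q\<bar>"
proof -
  define a where "a q = 2 * d q / 3 ^ Suc q" for q
  have "norm (\<Sum>q. a (q + Suc p)) \<le> (\<Sum>q. (2 / 3 ^ (p+2)) * (1/3::real) ^ q)"
  proof (rule norm_suminf_le)
    show "norm (a (q + Suc p)) \<le> (2 / 3 ^ (p+2)) * (1/3) ^ q" for q
      using bd[of "q + Suc p"] by (auto simp: a_def abs_mult power_add power_divide field_simps)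
    show "summable (\<lambda>q. (2 / 3 ^ (p+2)) * (1/3::real) ^ q)"
      by (intro summable_mult summable_geometric) auto
  qed
  also have "\<dots> = 1 / 3 ^ Suc p"
    by (subst suminf_mult) (simp_all add: suminf_geometric)
  finally have tail: "\<bar>\<Sum>q. a (q + Suc p)\<bar> \<le> 1 / 3 ^ Suc p" by simp
  have "(\<Sum>q. a q) = (\<Sum>q. a (q + Suc p)) + a p"
    using suminf_split_initial_segment[OF summable_ternary_series[of d, OF bd], of "Suc p"] zero
    by (simp add: a_def)
  moreover have "\<bar>a p\<bar> = 2 / 3 ^ Suc p"
    using one by (simp add: a_def abs_mult)
  ultimately show ?thesis
    using tail unfolding a_def by linarith
qed

definition ternary_code :: "(nat \<Rightarrow> 'a set) \<Rightarrow> 'a \<Rightarrow> real" where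
  "ternary_code F x = (\<Sum>p. 2 * indicator (F p) x / 3 ^ Suc p)"

lemma summable_ternary_code: "summable (\<lambda>p. 2 * indicator (F p) x / 3 ^ Suc p :: real)"
  by (rule summable_ternary_series) (auto simp: indicator_def)

lemma ternary_code_bounds: "ternary_code F x \<in> {0..1}"
  unfolding atLeastAtMost_iff
proof
  show "0 \<le> ternary_code F x"
    unfolding ternary_code_def by (intro suminf_nonneg summable_ternary_code) auto
  have "ternary_code F x \<le> (\<Sum>p. 2 * 1 / 3 ^ Suc p :: real)"
    unfolding ternary_code_def
    by (intro suminf_le summable_ternary_code summable_ternary_series) (auto simp: indicator_def)
  also have "\<dots> = (\<Sum>p. (2/3) * (1/3) ^ p)"
    by (simp add: power_divide field_simps)
  also have "\<dots> = 1"
    by (subst suminf_mult) (simp_all add: suminf_geometric)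
  finally show "ternary_code F x \<le> 1" .
qed

lemma ternary_code_measurable:
  assumes "\<And>p. F p \<in> sets borel"
  shows "ternary_code F \<in> borel_measurable borel"
  unfolding ternary_code_def
  by (intro borel_measurable_suminf borel_measurable_divide borel_measurable_times
      borel_measurable_const borel_measurable_indicator assms)

lemma ternary_code_close_imp_same_digits:
  assumes close: "\<bar>ternary_code F x - ternary_code F y\<bar> < 1 / 3 ^ N" and "q < N"
  shows "x \<in> F q \<longleftrightarrow> y \<in> F q"
proof (rule ccontr)
  define d where "d p = indicator (F p) x - (indicator (F p) y :: real)" for p
  assume "\<not> (x \<in> F q \<longleftrightarrow> y \<in> F q)"
  then have "d q \<noteq> 0"
    by (auto simp: d_def indicator_def)
  define p where "p = (LEAST p. d p \<noteq> 0)"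
  have "d p \<noteq> 0" "p \<le> q"
    using LeastI[of "\<lambda>p. d p \<noteq> 0"] Least_le[of "\<lambda>p. d p \<noteq> 0"] \<open>d q \<noteq> 0\<close>
    by (auto simp: p_def)
  have "ternary_code F x - ternary_code F y = (\<Sum>p. 2 * d p / 3 ^ Suc p)"
    unfolding ternary_code_def d_def
    by (subst suminf_diff[OF summable_ternary_code summable_ternary_code])
       (simp add: right_diff_distrib diff_divide_distrib)
  also have "1 / 3 ^ Suc p \<le> \<bar>\<dots>\<bar>"
  proof (rule ternary_series_first_digit)
    show "\<bar>d r\<bar> \<le> 1" for r
      by (auto simp: d_def indicator_def)
    show "d r = 0" if "r < p" for r
      using not_less_Least that unfolding p_def by blast
    show "\<bar>d p\<bar> = 1"
      using \<open>d p \<noteq> 0\<close> by (auto simp: d_def indicator_def split: if_splits)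
  qed
  moreover have "(1::real) / 3 ^ N \<le> 1 / 3 ^ Suc p"
    using \<open>p \<le> q\<close> \<open>q < N\<close> by (intro divide_left_mono power_increasing) auto
  ultimately show False
    using close by linarith
qed

lemma compact_finite_nets:
  assumes "compact (UNIV :: 'a set)"
  obtains qs :: "nat \<Rightarrow> 'a::metric_space list" where "\<And>m x. \<exists>j<length (qs m). dist x (qs m ! j) < 1 / (real m + 1)"
proof -
  have "\<exists>xs :: 'a list. \<forall>x. \<exists>j<length xs. dist x (xs ! j) < 1 / (real m + 1)" for m
  proof -
    have "1 / (real m + 1) > 0"
      by simp
    moreover have "\<forall>\<epsilon>>0. \<exists>Q. finite Q \<and> UNIV \<subseteq> (\<Union>q\<in>Q. ball (q::'a) \<epsilon>)"
      using assms unfolding compact_eq_totally_bounded by (elim conjE)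
    ultimately obtain Q :: "'a set" where "finite Q" and cover: "UNIV \<subseteq> (\<Union>q\<in>Q. ball q (1 / (real m + 1)))"
      by meson
    obtain xs where xs: "set xs = Q"
      using finite_list[OF \<open>finite Q\<close>] by blast
    show ?thesis
    proof (intro exI[of _ xs] allI)
      fix x
      obtain q where "q \<in> Q" "dist q x < 1 / (real m + 1)"
        using subsetD[OF cover UNIV_I[of x]] by auto
      moreover obtain j where "j < length xs" "xs ! j = q"
        using xs \<open>q \<in> Q\<close> by (auto simp: in_set_conv_nth)
      ultimately show "\<exists>j<length xs. dist x (xs ! j) < 1 / (real m + 1)"
        by (auto simp: dist_commute)
    qed
  qed
  then have "\<exists>qs :: nat \<Rightarrow> 'a list. \<forall>m x. \<exists>j<length (qs m). dist x (qs m ! j) < 1 / (real m + 1)"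
    by (rule choice[OF allI])
  then show ?thesis
    using that by blast
qed

text \<open>Coding points by the ternary digits of their memberships in the closed balls of finer
  and finer finite nets gives a Borel map into \<open>[0, 1]\<close> whose inverse is uniformly continuous.\<close>
lemma compact_metric_real_coding:
  assumes "compact (UNIV :: 'a set)"
  obtains e :: "'a::metric_space \<Rightarrow> real"
  where "e \<in> borel_measurable borel" "\<And>x. e x \<in> {0..1}"
    and "\<And>\<epsilon>. \<epsilon> > 0 \<Longrightarrow> \<exists>\<eta>>0. \<forall>x y. \<bar>e x - e y\<bar> < \<eta> \<longrightarrow> dist x y < \<epsilon>"
proof -
  obtain qs :: "nat \<Rightarrow> 'a list" where net: "\<And>m x. \<exists>j<length (qs m). dist x (qs m ! j) < 1 / (real m + 1)"
    using compact_finite_nets[OF assms] by blast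
  define F where "F p = (case prod_decode p of (m, j) \<Rightarrow>
     if j < length (qs m) then cball (qs m ! j) (1 / (real m + 1)) else {})" for p
  have F: "F (prod_encode (m, j)) = cball (qs m ! j) (1 / (real m + 1))" if "j < length (qs m)" for m j
    using that by (simp add: F_def)
  have "\<exists>\<eta>>0. \<forall>x y. \<bar>ternary_code F x - ternary_code F y\<bar> < \<eta> \<longrightarrow> dist x y < \<epsilon>"
    if "\<epsilon> > 0" for \<epsilon>
  proof -
    obtain m :: nat where "inverse (real (Suc m)) < \<epsilon> / 2"
      using reals_Archimedean[of "\<epsilon> / 2"] \<open>\<epsilon> > 0\<close> by auto
    then have m: "2 / (real m + 1) < \<epsilon>"
      by (simp add: field_simps)
    have "finite ((\<lambda>j. prod_encode (m, j)) ` {..<length (qs m)})"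
      by simp
    then obtain N where "(\<lambda>j. prod_encode (m, j)) ` {..<length (qs m)} \<subseteq> {..<N}"
      using finite_nat_bounded by blast
    then have N: "\<And>j. j < length (qs m) \<Longrightarrow> prod_encode (m, j) < N"
      by auto
    show ?thesis
    proof (intro exI[of _ "1 / 3 ^ N"] conjI allI impI)
      fix x y assume close: "\<bar>ternary_code F x - ternary_code F y\<bar> < 1 / 3 ^ N"
      obtain j where j: "j < length (qs m)" "dist x (qs m ! j) < 1 / (real m + 1)"
        using net by blast
      then have "x \<in> F (prod_encode (m, j))"
        by (simp add: F dist_commute)
      then have "y \<in> F (prod_encode (m, j))"
        using ternary_code_close_imp_same_digits[OF close N[OF j(1)]] by simp
      then have "dist y (qs m ! j) \<le> 1 / (real m + 1)"
        using j(1) by (simp add: F dist_commute)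
      moreover have "2 / (real m + 1) = 1 / (real m + 1) + 1 / (real m + 1)"
        by (simp add: add_divide_distrib[symmetric])
      ultimately show "dist x y < \<epsilon>"
        using j(2) m dist_triangle2[of x y "qs m ! j"] by linarith
    qed simp
  qed
  moreover have "ternary_code F \<in> borel_measurable borel"
    by (rule ternary_code_measurable) (auto simp: F_def split: prod.splits)
  ultimately show ?thesis
    by (intro that[of "ternary_code F"] ternary_code_bounds)
qed

lemma closure_graph_modulus:
  fixes S :: "('a::metric_space \<times> 'b::metric_space) set"
  assumes "\<And>a b. a \<in> S \<Longrightarrow> b \<in> S \<Longrightarrow> dist (fst a) (fst b) < \<eta> \<Longrightarrow> dist (snd a) (snd b) < \<epsilon>"
    and "a \<in> closure S" "b \<in> closure S" "dist (fst a) (fst b) < \<eta>"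
  shows "dist (snd a) (snd b) \<le> \<epsilon>"
proof -
  obtain as bs where as: "\<And>n. as n \<in> S" "as \<longlonglongrightarrow> a" and bs: "\<And>n. bs n \<in> S" "bs \<longlonglongrightarrow> b"
    using assms(2,3) by (meson closure_sequential)
  have "(\<lambda>n. dist (fst (as n)) (fst (bs n))) \<longlonglongrightarrow> dist (fst a) (fst b)"
    by (intro tendsto_intros as bs)
  then have "eventually (\<lambda>n. dist (fst (as n)) (fst (bs n)) < \<eta>) sequentially"
    using assms(4) by (rule order_tendstoD)
  then have "eventually (\<lambda>n. dist (snd (as n)) (snd (bs n)) \<le> \<epsilon>) sequentially"
  proof eventually_elim
    case (elim n)
    show ?case
      using assms(1)[OF as(1) bs(1) elim] by simp
  qed
  moreover have "(\<lambda>n. dist (snd (as n)) (snd (bs n))) \<longlonglongrightarrow> dist (snd a) (snd b)"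
    by (intro tendsto_intros as bs)
  ultimately show ?thesis
    by (intro tendsto_upperbound) auto
qed

lemma graph_with_modulus_continuous:
  fixes G :: "('a::metric_space \<times> 'b::metric_space) set"
  assumes modulus: "\<And>\<epsilon>. \<epsilon> > 0 \<Longrightarrow> \<exists>\<eta>>0. \<forall>a\<in>G. \<forall>b\<in>G. dist (fst a) (fst b) < \<eta> \<longrightarrow> dist (snd a) (snd b) \<le> \<epsilon>"
  defines "\<psi> \<equiv> \<lambda>t. SOME x. (t, x) \<in> G"
  shows graph_with_modulus_eq: "(t, x) \<in> G \<Longrightarrow> \<psi> t = x"
    and graph_with_modulus_continuous_on: "continuous_on (fst ` G) \<psi>"
proof -
  have unique: "x = x'" if "(t, x) \<in> G" "(t, x') \<in> G" for t x x'
  proof (rule ccontr)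
    assume "x \<noteq> x'"
    then obtain \<eta> where "\<eta> > 0" "\<forall>a\<in>G. \<forall>b\<in>G. dist (fst a) (fst b) < \<eta> \<longrightarrow> dist (snd a) (snd b) \<le> dist x x' / 2"
      using modulus[of "dist x x' / 2"] by auto
    then have "dist x x' \<le> dist x x' / 2"
      using that by fastforce
    then show False
      using \<open>x \<noteq> x'\<close> by simp
  qed
  have graph: "(t, \<psi> t) \<in> G" if "t \<in> fst ` G" for t
    using that unfolding \<psi>_def by (auto intro: someI)
  show "\<psi> t = x" if "(t, x) \<in> G"
  proof -
    have "t \<in> fst ` G"
      using that by (rule image_eqI[rotated]) simp
    then show ?thesis
      using unique[OF graph that] by simp
  qed
  show "continuous_on (fst ` G) \<psi>"
    unfolding continuous_on_iff
  proof (intro ballI allI impI)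
    fix t and \<epsilon> :: real assume "t \<in> fst ` G" "\<epsilon> > 0"
    then obtain \<eta> where "\<eta> > 0" and \<eta>: "\<forall>a\<in>G. \<forall>b\<in>G. dist (fst a) (fst b) < \<eta> \<longrightarrow> dist (snd a) (snd b) \<le> \<epsilon> / 2"
      using modulus[of "\<epsilon> / 2"] by auto
    have "dist (\<psi> t') (\<psi> t) < \<epsilon>" if "t' \<in> fst ` G" "dist t' t < \<eta>" for t'
      using \<eta>[rule_format, OF graph[OF that(1)] graph[OF \<open>t \<in> fst ` G\<close>]] that(2) \<open>\<epsilon> > 0\<close> by simp
    with \<open>\<eta> > 0\<close> show "\<exists>\<eta>>0. \<forall>t'\<in>fst ` G. dist t' t < \<eta> \<longrightarrow> dist (\<psi> t') (\<psi> t) < \<epsilon>"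
      by blast
  qed
qed

text \<open>The closure of the graph of \<open>e\<close> in \<open>\<real> \<times> X\<close> is compact and, by the uniform continuity
  of \<open>e\<^sup>-\<^sup>1\<close>, still the graph of a continuous map over its projection \<open>K\<close>.\<close>
lemma continuous_left_inverse_on_compact:
  fixes e :: "'a::metric_space \<Rightarrow> real"
  assumes "compact (UNIV :: 'a set)" and "bounded (range e)"
    and unif: "\<And>\<epsilon>. \<epsilon> > 0 \<Longrightarrow> \<exists>\<eta>>0. \<forall>x y. \<bar>e x - e y\<bar> < \<eta> \<longrightarrow> dist x y < \<epsilon>"
  obtains K \<psi> where "compact K" "range e \<subseteq> K" "continuous_on K \<psi>" "\<And>x. \<psi> (e x) = x"
proof -
  define G where "G = closure (range (\<lambda>x. (e x, x)))"
  have "G \<subseteq> closure (range e) \<times> UNIV"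
    unfolding G_def by (intro closure_minimal closed_Times) (auto intro: closure_subset[THEN subsetD])
  moreover have "compact (closure (range e) \<times> UNIV \<inter> G)"
    using assms(1,2) unfolding G_def by (intro compact_Int_closed compact_Times) (auto simp: compact_closure)
  ultimately have "compact G"
    by (simp add: Int_absorb1)
  have modulus: "\<exists>\<eta>>0. \<forall>a\<in>G. \<forall>b\<in>G. dist (fst a) (fst b) < \<eta> \<longrightarrow> dist (snd a) (snd b) \<le> \<epsilon>"
    if "\<epsilon> > 0" for \<epsilon>
  proof -
    obtain \<eta> where "\<eta> > 0" and \<eta>: "\<And>x y. \<bar>e x - e y\<bar> < \<eta> \<Longrightarrow> dist x y < \<epsilon>"
      using unif \<open>\<epsilon> > 0\<close> by blast
    have "dist (snd a) (snd b) \<le> \<epsilon>" if "a \<in> G" "b \<in> G" "dist (fst a) (fst b) < \<eta>" for a b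
      using that unfolding G_def by (rule closure_graph_modulus[rotated]) (auto simp: dist_real_def \<eta>)
    with \<open>\<eta> > 0\<close> show ?thesis
      by blast
  qed
  have graph_e: "(e x, x) \<in> G" for x
    unfolding G_def by (intro closure_subset[THEN subsetD]) auto
  show ?thesis
  proof (rule that)
    show "compact (fst ` G)"
      by (intro compact_continuous_image continuous_intros \<open>compact G\<close>)
    show "range e \<subseteq> fst ` G"
      using graph_e by force
    show "continuous_on (fst ` G) (\<lambda>t. SOME x. (t, x) \<in> G)"
      using modulus by (rule graph_with_modulus_continuous_on)
    show "(SOME y. (e x, y) \<in> G) = x" for x
      using modulus graph_e by (rule graph_with_modulus_eq)
  qed
qed

section \<open>Separation and thickenings\<close>

lemma finite_uniform_pos_bound:
  fixes Q :: "'a \<Rightarrow> real \<Rightarrow> bool"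
  assumes "finite I" and "\<And>i. i \<in> I \<Longrightarrow> \<exists>d>0. Q i d"
    and mono: "\<And>i d d'. Q i d \<Longrightarrow> 0 < d' \<Longrightarrow> d' \<le> d \<Longrightarrow> Q i d'"
  shows "\<exists>d>0. \<forall>i\<in>I. Q i d"
  using assms(1,2)
proof (induction rule: finite_induct)
  case empty
  show ?case
    using zero_less_one by blast
next
  case (insert i I)
  obtain d where "d > 0" "\<forall>j\<in>I. Q j d"
    using insert by blast
  moreover obtain d' where "d' > 0" "Q i d'"
    using insert by blast
  ultimately show ?case
    by (intro exI[of _ "min d d'"]) (auto intro: mono)
qed

lemma separate_compact_closed_metric:
  fixes S T :: "'a::metric_space set"
  assumes "compact S" "closed T" "S \<inter> T = {}"
  shows "\<exists>\<delta>>0. \<forall>x\<in>S. \<forall>y\<in>T. \<delta> \<le> dist x y"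
proof (cases "S = {} \<or> T = {}")
  case False
  have "continuous_on S (\<lambda>x. infdist x T)"
    by (intro continuous_intros)
  then obtain x0 where "x0 \<in> S" and x0: "\<And>x. x \<in> S \<Longrightarrow> infdist x0 T \<le> infdist x T"
    using continuous_attains_inf[OF assms(1)] False by blast
  then have "infdist x0 T > 0"
    using assms(2,3) False by (intro infdist_pos_not_in_closed) auto
  moreover have "infdist x0 T \<le> dist x y" if "x \<in> S" "y \<in> T" for x y
    using x0[OF that(1)] infdist_le[OF that(2), of x] by linarith
  ultimately show ?thesis
    by blast
qed (auto intro: exI[of _ 1])

lemma compact_family_uniform_separation:
  fixes C :: "nat \<Rightarrow> 'a::metric_space set"
  assumes "\<And>i. i < k \<Longrightarrow> compact (C i)" and "\<And>i j. i < k \<Longrightarrow> j < k \<Longrightarrow> i \<noteq> j \<Longrightarrow> C i \<inter> C j = {}"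
  shows "\<exists>\<delta>>0. \<forall>i<k. \<forall>j<k. i \<noteq> j \<longrightarrow> (\<forall>x\<in>C i. \<forall>y\<in>C j. \<delta> \<le> dist x y)"
proof -
  have "\<exists>\<delta>>0. \<forall>p\<in>{..<k} \<times> {..<k}. fst p \<noteq> snd p \<longrightarrow> (\<forall>x\<in>C (fst p). \<forall>y\<in>C (snd p). \<delta> \<le> dist x y)"
  proof (rule finite_uniform_pos_bound)
    fix p assume "p \<in> {..<k} \<times> {..<k}"
    then obtain i j where p: "p = (i, j)" "i < k" "j < k"
      by blast
    show "\<exists>\<delta>>0. fst p \<noteq> snd p \<longrightarrow> (\<forall>x\<in>C (fst p). \<forall>y\<in>C (snd p). \<delta> \<le> dist x y)"
    proof (cases "i = j")
      case False
      then show ?thesis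
        using separate_compact_closed_metric[OF assms(1) compact_imp_closed[OF assms(1)] assms(2)] p by simp
    qed (simp add: p(1) exI[of _ 1])
  next
    fix p and d d' :: real
    assume "fst p \<noteq> snd p \<longrightarrow> (\<forall>x\<in>C (fst p). \<forall>y\<in>C (snd p). d \<le> dist x y)" "d' \<le> d"
    then show "fst p \<noteq> snd p \<longrightarrow> (\<forall>x\<in>C (fst p). \<forall>y\<in>C (snd p). d' \<le> dist x y)"
      by force
  qed simp
  then show ?thesis
    by force
qed

lemma closed_Diff_open_frontier:
  assumes "open U" "frontier P \<subseteq> U"
  shows "closed (P - U)"
proof -
  have "P - U = closure P - U"
    using assms(2) closure_subset[of P] interior_subset[of P] by (auto simp: frontier_def)
  then show ?thesis
    using assms(1) by (simp add: closed_Diff)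
qed

definition thickening :: "'a::metric_space set \<Rightarrow> real \<Rightarrow> 'a set" where
  "thickening B t = (\<Union>b\<in>B. ball b t)"

lemma open_thickening: "open (thickening B t)"
  by (auto simp: thickening_def)

lemma thickening_mono: "t \<le> s \<Longrightarrow> thickening B t \<subseteq> thickening B s"
  by (auto simp: thickening_def)

lemma thickening_empty [simp]: "thickening {} t = {}"
  by (simp add: thickening_def)

lemma subset_thickening: "0 < t \<Longrightarrow> B \<subseteq> thickening B t"
  by (force simp: thickening_def)

lemma Inter_thickening: "(\<Inter>m. thickening B (1 / Suc m)) = closure B"
proof (intro equalityI subsetI)
  fix x assume x: "x \<in> (\<Inter>m. thickening B (1 / Suc m))"
  show "x \<in> closure B"
    unfolding closure_approachable
  proof (intro allI impI)
    fix \<epsilon> :: real assume "\<epsilon> > 0"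
    then obtain m where "inverse (real (Suc m)) < \<epsilon>"
      using reals_Archimedean by blast
    moreover obtain b where "b \<in> B" "dist b x < 1 / Suc m"
      using x by (auto simp: thickening_def)
    ultimately show "\<exists>b\<in>B. dist b x < \<epsilon>"
      by (auto simp: inverse_eq_divide intro: order.strict_trans)
  qed
next
  fix x assume "x \<in> closure B"
  then show "x \<in> (\<Inter>m. thickening B (1 / Suc m))"
    by (auto simp: closure_approachable thickening_def)
qed

lemma thickening_bump:
  fixes B :: "'a::metric_space set"
  assumes "B \<noteq> {}" "t < s"
  obtains \<gamma> :: "'a \<Rightarrow> real" where "continuous_on UNIV \<gamma>"
    and "\<And>x. indicator (thickening B t) x \<le> \<gamma> x" "\<And>x. \<gamma> x \<le> indicator (thickening B s) x"
proof
  define \<gamma> where "\<gamma> x = min 1 (max 0 ((s - infdist x B) / (s - t)))" for x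
  show "continuous_on UNIV \<gamma>"
    unfolding \<gamma>_def by (intro continuous_intros) (use assms(2) in auto)
  show "indicator (thickening B t) x \<le> \<gamma> x" for x
  proof (cases "x \<in> thickening B t")
    case True
    then obtain b where "b \<in> B" "dist b x < t"
      by (auto simp: thickening_def)
    then have "infdist x B < t"
      using infdist_le[of b B x] by (simp add: dist_commute)
    then show ?thesis
      using assms(2) by (simp add: \<gamma>_def)
  qed (simp add: \<gamma>_def)
  show "\<gamma> x \<le> indicator (thickening B s) x" for x
  proof (cases "infdist x B < s")
    case True
    then obtain b where "b \<in> B" "dist x b < s"
      using assms(1) by (auto simp: infdist_def cINF_less_iff)
    then have "x \<in> thickening B s"
      by (auto simp: thickening_def dist_commute)
    then show ?thesis
      by (simp add: \<gamma>_def)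
  qed (use assms(2) in \<open>simp add: \<gamma>_def divide_nonpos_pos\<close>)
qed

section \<open>Weak convergence and Prokhorov's theorem\<close>

definition weakly_converges :: "(nat \<Rightarrow> 'a::topological_space measure) \<Rightarrow> 'a measure \<Rightarrow> bool" where
  "weakly_converges \<mu>s \<nu> \<longleftrightarrow>
     (\<forall>g :: 'a \<Rightarrow> real. continuous_on UNIV g \<longrightarrow> (\<lambda>i. \<integral>x. g x \<partial>\<mu>s i) \<longlonglongrightarrow> (\<integral>x. g x \<partial>\<nu>))"

lemma borel_prob_measurable:
  assumes "borel_prob M" "f \<in> borel_measurable borel"
  shows "f \<in> borel_measurable M"
proof -
  have "sets M = sets borel"
    using assms(1) by (simp add: borel_prob_def)
  then show ?thesis
    using assms(2) measurable_cong_sets[of M borel borel borel] by simp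
qed

lemma borel_prob_integrable_bounded:
  fixes g :: "'a::topological_space \<Rightarrow> real"
  assumes "borel_prob M" "g \<in> borel_measurable borel" "\<And>x. \<bar>g x\<bar> \<le> B"
  shows "integrable M g"
proof -
  interpret prob_space M
    using assms(1) by (simp add: borel_prob_def)
  show ?thesis
    using assms(3) borel_prob_measurable[OF assms(1,2)] by (intro integrable_const_bound[where B = B]) auto
qed

lemma borel_prob_distr:
  assumes "prob_space M" "f \<in> measurable M borel"
  shows "borel_prob (distr M borel f)"
  using assms by (simp add: borel_prob_def prob_space.prob_space_distr)

lemma real_distribution_distr:
  assumes "borel_prob M" "e \<in> borel_measurable borel"
  shows "real_distribution (distr M borel e)"
proof -
  interpret prob_space M
    using assms(1) by (simp add: borel_prob_def)
  show ?thesis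
    using borel_prob_measurable[OF assms]
    by (intro real_distribution.intro prob_space_distr real_distribution_axioms.intro) simp_all
qed

lemma AE_distr_range:
  assumes "borel_prob M" "e \<in> borel_measurable borel" "range e \<subseteq> A" "A \<in> sets borel"
  shows "AE t in distr M borel e. t \<in> A"
  using assms borel_prob_measurable[OF assms(1,2)] by (subst AE_distr_iff) auto

lemma tight_distr_unit_interval:
  assumes "\<And>n. borel_prob (\<mu>s n)" "e \<in> borel_measurable borel" "range e \<subseteq> {0..1}"
  shows "tight (\<lambda>n. distr (\<mu>s n) borel e)"
  unfolding tight_def
proof (intro conjI allI impI real_distribution_distr assms(1,2))
  fix \<epsilon> :: real assume "\<epsilon> > 0"
  have "measure (distr (\<mu>s n) borel e) {-1<..2} = 1" for n
  proof -
    interpret real_distribution "distr (\<mu>s n) borel e"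
      by (rule real_distribution_distr[OF assms(1,2)])
    have "AE t in distr (\<mu>s n) borel e. t \<in> {-1<..2}"
      using assms(3) by (intro AE_distr_range[OF assms(1,2)]) auto
    then show ?thesis
      by (simp add: prob_eq_1)
  qed
  with \<open>\<epsilon> > 0\<close> show "\<exists>a b::real. a < b \<and> (\<forall>n. 1 - \<epsilon> < measure (distr (\<mu>s n) borel e) {a<..b})"
    by (intro exI[of _ "-1"] exI[of _ 2]) auto
qed

lemma weak_star_closure_self: "borel_prob (\<mu> n) \<Longrightarrow> \<mu> n \<in> weak_star_closure \<mu>"
  unfolding weak_star_closure_def by (auto intro!: exI[of _ n])

lemma weakly_converges_in_weak_star_closure:
  assumes "borel_prob \<nu>" "weakly_converges (\<mu> \<circ> s) \<nu>"
  shows "\<nu> \<in> weak_star_closure \<mu>"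
  unfolding weak_star_closure_def
proof (intro CollectI conjI allI impI assms(1))
  fix G :: "('a \<Rightarrow> real) set" and \<epsilon> :: real
  assume G: "finite G \<and> (\<forall>g\<in>G. continuous_on UNIV g) \<and> \<epsilon> > 0"
  have "\<forall>g\<in>G. eventually (\<lambda>i. \<bar>(\<integral>x. g x \<partial>\<mu> (s i)) - (\<integral>x. g x \<partial>\<nu>)\<bar> < \<epsilon>) sequentially"
  proof
    fix g assume "g \<in> G"
    then have "(\<lambda>i. \<integral>x. g x \<partial>\<mu> (s i)) \<longlonglongrightarrow> (\<integral>x. g x \<partial>\<nu>)"
      using G assms(2) by (auto simp: weakly_converges_def)
    then show "eventually (\<lambda>i. \<bar>(\<integral>x. g x \<partial>\<mu> (s i)) - (\<integral>x. g x \<partial>\<nu>)\<bar> < \<epsilon>) sequentially"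
      using G by (auto simp: tendsto_iff dist_real_def)
  qed
  then have "eventually (\<lambda>i. \<forall>g\<in>G. \<bar>(\<integral>x. g x \<partial>\<mu> (s i)) - (\<integral>x. g x \<partial>\<nu>)\<bar> < \<epsilon>) sequentially"
    using G by (intro eventually_ball_finite) auto
  then show "\<exists>n. \<forall>g\<in>G. \<bar>(\<integral>x. g x \<partial>\<mu> n) - (\<integral>x. g x \<partial>\<nu>)\<bar> < \<epsilon>"
    by (auto simp: eventually_sequentially)
qed

lemma borel_prob_thickening: "borel_prob M \<Longrightarrow> thickening B t \<in> sets M"
  by (simp add: borel_prob_def open_thickening)

lemma measure_thickening_mono:
  assumes "borel_prob M" "t \<le> s"
  shows "measure M (thickening B t) \<le> measure M (thickening B s)"
proof -
  interpret prob_space M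
    using assms(1) by (simp add: borel_prob_def)
  show ?thesis
    by (rule finite_measure_mono[OF thickening_mono[OF assms(2)] borel_prob_thickening[OF assms(1)]])
qed

lemma measure_thickening_tendsto:
  assumes "borel_prob M"
  shows "(\<lambda>m. measure M (thickening B (1 / Suc m))) \<longlonglongrightarrow> measure M (closure B)"
proof -
  interpret prob_space M
    using assms by (simp add: borel_prob_def)
  have "range (\<lambda>m. thickening B (1 / Suc m)) \<subseteq> sets M"
    using borel_prob_thickening[OF assms] by blast
  moreover have "decseq (\<lambda>m. thickening B (1 / Suc m))"
    by (intro decseq_SucI thickening_mono) (simp add: divide_simps)
  ultimately have "(\<lambda>m. measure M (thickening B (1 / Suc m))) \<longlonglongrightarrow> measure M (\<Inter>m. thickening B (1 / Suc m))"
    by (rule finite_Lim_measure_decseq)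
  then show ?thesis
    by (simp only: Inter_thickening)
qed

lemma weakly_converges_thickening_le:
  assumes "\<And>i. borel_prob (\<mu>s i)" "borel_prob \<nu>" "weakly_converges \<mu>s \<nu>" "B \<noteq> {}" "t < s"
    and "eventually (\<lambda>i. c \<le> measure (\<mu>s i) (thickening B t)) sequentially"
  shows "c \<le> measure \<nu> (thickening B s)"
proof -
  obtain \<gamma> :: "'a \<Rightarrow> real" where cont: "continuous_on UNIV \<gamma>"
    and lower: "\<And>x. indicator (thickening B t) x \<le> \<gamma> x" and upper: "\<And>x. \<gamma> x \<le> indicator (thickening B s) x"
    using thickening_bump[OF assms(4,5)] by blast
  have "\<bar>\<gamma> x\<bar> \<le> 1" for x
    using lower[of x] upper[of x] by (auto simp: indicator_def of_bool_def split: if_splits)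
  then have integrable: "integrable M \<gamma>" if "borel_prob M" for M
    using that cont by (intro borel_prob_integrable_bounded borel_measurable_continuous_onI)
  have indicator_integrable: "integrable M (indicator (thickening B r) :: 'a \<Rightarrow> real)"
    if "borel_prob M" for M r
    using that by (intro borel_prob_integrable_bounded borel_measurable_indicator)
      (auto simp: open_thickening)
  have measure_eq: "measure M (thickening B r) = (\<integral>x. indicator (thickening B r) x \<partial>M)"
    if "borel_prob M" for M r
    using that by (simp add: borel_prob_def open_thickening)
  have "eventually (\<lambda>i. c \<le> (\<integral>x. \<gamma> x \<partial>\<mu>s i)) sequentially"
    using assms(6)
  proof eventually_elim
    case (elim i)
    also have "measure (\<mu>s i) (thickening B t) \<le> (\<integral>x. \<gamma> x \<partial>\<mu>s i)"
      unfolding measure_eq[OF assms(1)]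
      by (intro integral_mono indicator_integrable integrable assms(1) lower)
    finally show ?case .
  qed
  with assms(3) cont have "c \<le> (\<integral>x. \<gamma> x \<partial>\<nu>)"
    by (intro tendsto_lowerbound[of "\<lambda>i. \<integral>x. \<gamma> x \<partial>\<mu>s i"]) (auto simp: weakly_converges_def)
  also have "\<dots> \<le> measure \<nu> (thickening B s)"
    unfolding measure_eq[OF assms(2)]
    by (intro integral_mono indicator_integrable integrable assms(2) upper)
  finally show ?thesis .
qed

lemma (in prob_space) AE_eq_1_of_integral_eq_1:
  fixes f :: "'a \<Rightarrow> real"
  assumes "integrable M f" "AE x in M. f x \<le> 1" "(\<integral>x. f x \<partial>M) = 1"
  shows "AE x in M. f x = 1"
proof -
  have "(\<integral>x. 1 - f x \<partial>M) = 0"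
    using assms(1,3) prob_space by (simp add: Bochner_Integration.integral_diff)
  moreover have "integrable M (\<lambda>x. 1 - f x)"
    using assms(1) by simp
  moreover have "AE x in M. 0 \<le> 1 - f x"
    using assms(2) by auto
  ultimately have "AE x in M. 1 - f x = 0"
    by (simp add: integral_nonneg_eq_0_iff_AE)
  then show ?thesis
    by auto
qed

lemma weak_conv_m_closed_support:
  assumes "\<And>n. real_distribution (\<mu> n)" "real_distribution M" "weak_conv_m \<mu> M"
    and "closed K" "K \<noteq> {}" and support: "\<And>n. AE x in \<mu> n. x \<in> K"
  shows "AE x in M. x \<in> K"
proof -
  interpret M: real_distribution M by fact
  define h where "h t = max 0 (1 - infdist t K)" for t
  have cont: "continuous_on UNIV h"
    unfolding h_def by (intro continuous_intros)
  have h_meas: "h \<in> borel_measurable borel"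
    using cont by (rule borel_measurable_continuous_onI)
  have bound: "\<bar>h t\<bar> \<le> 1" for t
    unfolding h_def using infdist_nonneg[of t K] by auto
  have h_K: "h t = 1" if "t \<in> K" for t
    using that by (simp add: h_def)
  have "(\<lambda>n. \<integral>t. h t \<partial>\<mu> n) \<longlonglongrightarrow> (\<integral>t. h t \<partial>M)"
    using cont bound
    by (intro weak_conv_imp_integral_bdd_continuous_conv[OF assms(1-3)])
      (auto simp: continuous_on_eq_continuous_at)
  moreover have "(\<integral>t. h t \<partial>\<mu> n) = 1" for n
  proof -
    interpret real_distribution "\<mu> n" by (rule assms(1))
    have "h \<in> borel_measurable (\<mu> n)"
      using h_meas by (simp add: measurable_cong_sets[OF events_eq_borel refl])
    then have "(\<integral>t. h t \<partial>\<mu> n) = (\<integral>t. 1 \<partial>\<mu> n)"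
      using support[of n] by (intro integral_cong_AE) (auto simp: h_K elim!: AE_mp)
    then show ?thesis
      using prob_space by simp
  qed
  ultimately have "(\<integral>t. h t \<partial>M) = 1"
    using LIMSEQ_unique[OF _ tendsto_const] by fastforce
  moreover have "integrable M h"
    using bound h_meas by (intro M.integrable_const_bound[where B = 1]) auto
  ultimately have "AE t in M. h t = 1"
    using bound by (intro M.AE_eq_1_of_integral_eq_1) (auto simp: abs_le_iff)
  then show ?thesis
  proof (rule AE_mp, intro AE_I2 impI)
    fix t assume "h t = 1"
    then have "infdist t K = 0"
      using infdist_nonneg[of t K] by (auto simp: h_def max_def split: if_splits)
    then show "t \<in> K"
      using in_closed_iff_infdist_zero[OF assms(4,5)] by simp
  qed
qed

text \<open>The Tietze extension of \<open>g \<circ> \<psi>\<close> from \<open>K\<close> turns a test function \<open>g\<close> on \<open>X\<close> into one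
  on \<open>\<real>\<close>.\<close>
lemma weakly_converges_pullback:
  fixes e :: "'a::metric_space \<Rightarrow> real"
  assumes "compact (UNIV :: 'a set)" "\<And>n. borel_prob (\<mu>s n)" "e \<in> borel_measurable borel"
    and "real_distribution M" "weak_conv_m (\<lambda>n. distr (\<mu>s n) borel e) M"
    and "closed K" "range e \<subseteq> K" "AE t in M. t \<in> K"
    and "\<psi> \<in> borel_measurable borel" "continuous_on K \<psi>" "\<And>x. \<psi> (e x) = x"
  shows "weakly_converges \<mu>s (distr M borel \<psi>)"
  unfolding weakly_converges_def
proof (intro allI impI)
  interpret M: real_distribution M by fact
  fix g :: "'a \<Rightarrow> real" assume g: "continuous_on UNIV g"
  have g_meas: "g \<in> borel_measurable borel"
    using g by (rule borel_measurable_continuous_onI)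
  have "bounded (range g)"
    by (rule compact_imp_bounded[OF compact_continuous_image[OF g assms(1)]])
  then obtain B where "B > 0" and B_range: "\<And>y. y \<in> range g \<Longrightarrow> norm y \<le> B"
    unfolding bounded_pos by blast
  then have "B \<ge> 0" and B: "\<And>x. norm (g x) \<le> B"
    by auto
  have "continuous_on K (g \<circ> \<psi>)"
    using g assms(10) by (intro continuous_on_compose) (auto intro: continuous_on_subset)
  then obtain h where h: "continuous_on UNIV h" "\<And>t. t \<in> K \<Longrightarrow> h t = g (\<psi> t)"
    and h_bound: "\<And>t. norm (h t) \<le> B"
    using Tietze[of K "g \<circ> \<psi>" UNIV B] assms(6) \<open>B \<ge> 0\<close> B by auto
  have h_meas: "h \<in> borel_measurable borel"
    using h(1) by (rule borel_measurable_continuous_onI)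
  have "(\<lambda>n. \<integral>t. h t \<partial>distr (\<mu>s n) borel e) \<longlonglongrightarrow> (\<integral>t. h t \<partial>M)"
    using h h_bound
    by (intro weak_conv_imp_integral_bdd_continuous_conv[OF real_distribution_distr[OF assms(2,3)] assms(4,5)])
      (auto simp: continuous_on_eq_continuous_at)
  moreover have "(\<integral>t. h t \<partial>distr (\<mu>s n) borel e) = (\<integral>x. g x \<partial>\<mu>s n)" for n
    using assms(7,11) h(2) by (simp add: integral_distr borel_prob_measurable[OF assms(2,3)] h_meas image_subset_iff)
  moreover have "(\<integral>t. h t \<partial>M) = (\<integral>x. g x \<partial>distr M borel \<psi>)"
  proof -
    have "(\<integral>t. h t \<partial>M) = (\<integral>t. g (\<psi> t) \<partial>M)"
      using assms(8) h(2) g_meas assms(9) h_meas by (intro integral_cong_AE) (auto elim!: AE_mp)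
    then show ?thesis
      by (simp add: integral_distr assms(9) g_meas)
  qed
  ultimately show "(\<lambda>n. \<integral>x. g x \<partial>\<mu>s n) \<longlonglongrightarrow> (\<integral>x. g x \<partial>distr M borel \<psi>)"
    by simp
qed

lemma borel_prob_weakly_convergent_subseq:
  fixes \<mu>s :: "nat \<Rightarrow> 'a::metric_space measure"
  assumes cpt: "compact (UNIV :: 'a set)" and prob: "\<And>n. borel_prob (\<mu>s n)"
  obtains r \<nu> where "strict_mono r" "borel_prob \<nu>" "weakly_converges (\<mu>s \<circ> r) \<nu>"
proof -
  obtain e :: "'a \<Rightarrow> real" where e_meas: "e \<in> borel_measurable borel" and e_range: "\<And>x. e x \<in> {0..1}"
    and e_unif: "\<And>\<epsilon>. \<epsilon> > 0 \<Longrightarrow> \<exists>\<eta>>0. \<forall>x y. \<bar>e x - e y\<bar> < \<eta> \<longrightarrow> dist x y < \<epsilon>"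
    using compact_metric_real_coding[OF cpt] by blast
  have "range e \<subseteq> {0..1}"
    using e_range by blast
  then have "bounded (range e)"
    by (rule bounded_subset[OF bounded_closed_interval])
  then obtain K \<psi> where "compact K" "range e \<subseteq> K" "continuous_on K \<psi>" and \<psi>_e: "\<And>x. \<psi> (e x) = x"
    using continuous_left_inverse_on_compact[OF cpt _ e_unif] by blast
  have "closed K" "K \<noteq> {}"
    using \<open>compact K\<close> \<open>range e \<subseteq> K\<close> by (auto intro: compact_imp_closed)
  have "tight (\<lambda>n. distr (\<mu>s n) borel e)"
    using prob e_meas \<open>range e \<subseteq> {0..1}\<close> by (rule tight_distr_unit_interval)
  from tight_imp_convergent_subsubsequence[OF this strict_mono_id]
  obtain r M where "strict_mono r" "real_distribution M"
    and "weak_conv_m ((\<lambda>n. distr (\<mu>s n) borel e) \<circ> id \<circ> r) M"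
    by blast
  then have conv: "weak_conv_m (\<lambda>n. distr (\<mu>s (r n)) borel e) M"
    by (simp add: comp_def)
  have "AE t in M. t \<in> K"
  proof (rule weak_conv_m_closed_support[OF _ \<open>real_distribution M\<close> conv \<open>closed K\<close> \<open>K \<noteq> {}\<close>])
    show "real_distribution (distr (\<mu>s (r n)) borel e)" for n
      using prob e_meas by (rule real_distribution_distr)
    show "AE t in distr (\<mu>s (r n)) borel e. t \<in> K" for n
      using prob e_meas \<open>range e \<subseteq> K\<close> borel_closed[OF \<open>closed K\<close>] by (rule AE_distr_range)
  qed
  define \<psi>' where "\<psi>' t = (if t \<in> K then \<psi> t else undefined)" for t
  have \<psi>'_meas: "\<psi>' \<in> borel_measurable borel"
    unfolding \<psi>'_def
    by (intro borel_measurable_continuous_on_if borel_closed \<open>closed K\<close> \<open>continuous_on K \<psi>\<close> continuous_on_const)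
  have \<psi>'_cont: "continuous_on K \<psi>'"
    using \<open>continuous_on K \<psi>\<close> by (rule continuous_on_cong[THEN iffD1, rotated 2]) (auto simp: \<psi>'_def)
  have "weakly_converges (\<mu>s \<circ> r) (distr M borel \<psi>')"
  proof (rule weakly_converges_pullback[OF cpt _ e_meas \<open>real_distribution M\<close> _ \<open>closed K\<close>
        \<open>range e \<subseteq> K\<close> \<open>AE t in M. t \<in> K\<close> \<psi>'_meas \<psi>'_cont])
    show "borel_prob ((\<mu>s \<circ> r) n)" for n
      by (simp add: prob)
    show "weak_conv_m (\<lambda>n. distr ((\<mu>s \<circ> r) n) borel e) M"
      using conv by (simp add: comp_def)
    show "\<psi>' (e x) = x" for x
      using \<psi>_e \<open>range e \<subseteq> K\<close> by (auto simp: \<psi>'_def)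
  qed
  moreover have "borel_prob (distr M borel \<psi>')"
  proof -
    interpret real_distribution M by fact
    have "\<psi>' \<in> borel_measurable M"
      using \<psi>'_meas by (simp add: measurable_cong_sets[OF events_eq_borel refl])
    then show ?thesis
      by (intro borel_prob_distr prob_space_axioms)
  qed
  ultimately show ?thesis
    using that \<open>strict_mono r\<close> by blast
qed

section \<open>Uniformly small neighbourhoods of null frontiers\<close>

lemma weak_star_closure_null:
  assumes equiv: "\<And>\<nu> \<nu>'. \<nu> \<in> weak_star_closure \<mu> \<Longrightarrow> \<nu>' \<in> weak_star_closure \<mu> \<Longrightarrow>
      absolutely_continuous \<nu> \<nu>'"
    and "borel_prob (\<mu> n)" "B \<in> sets borel" "emeasure (\<mu> n) B = 0" "\<nu> \<in> weak_star_closure \<mu>"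
  shows "emeasure \<nu> B = 0"
proof -
  have "B \<in> null_sets (\<mu> n)"
    using assms(2-4) by (simp add: borel_prob_def null_sets_def)
  then have "B \<in> null_sets \<nu>"
    using equiv[OF weak_star_closure_self[of \<mu> n, OF assms(2)] assms(5)] by (auto simp: absolutely_continuous_def)
  then show ?thesis
    by auto
qed

text \<open>Otherwise a weak limit of a subsequence along which the thickenings stay large charges every
  thickening of \<open>B\<close>, hence \<open>B\<close> itself.\<close>
lemma thickening_uniformly_small:
  fixes \<mu> :: "nat \<Rightarrow> 'a::metric_space measure"
  assumes cpt: "compact (UNIV :: 'a set)" and prob: "\<And>n. borel_prob (\<mu> n)"
    and "closed B" and null: "\<And>\<nu>. \<nu> \<in> weak_star_closure \<mu> \<Longrightarrow> emeasure \<nu> B = 0"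
    and "\<epsilon> > 0"
  shows "\<exists>t>0. \<forall>n. measure (\<mu> n) (thickening B t) \<le> \<epsilon>"
proof (rule ccontr)
  assume small_fails: "\<not> ?thesis"
  have "B \<noteq> {}"
  proof
    assume "B = {}"
    then have "\<forall>n. measure (\<mu> n) (thickening B 1) \<le> \<epsilon>"
      using \<open>\<epsilon> > 0\<close> by simp
    with small_fails show False
      using zero_less_one by blast
  qed
  have "\<exists>n. \<epsilon> < measure (\<mu> n) (thickening B (1 / Suc m))" for m :: nat
    using small_fails by (auto simp: not_le)
  then obtain nn where nn: "\<And>m. \<epsilon> < measure (\<mu> (nn m)) (thickening B (1 / Suc m))"
    by metis
  obtain r \<nu> where "strict_mono r" "borel_prob \<nu>" and conv: "weakly_converges (\<mu> \<circ> (nn \<circ> r)) \<nu>"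
    using borel_prob_weakly_convergent_subseq[OF cpt, of "\<mu> \<circ> nn"] prob by (auto simp: comp_assoc)
  have "measure \<nu> B = 0"
    using null[OF weakly_converges_in_weak_star_closure[OF \<open>borel_prob \<nu>\<close> conv]] by (simp add: measure_def)
  then have "(\<lambda>m. measure \<nu> (thickening B (1 / Suc m))) \<longlonglongrightarrow> 0"
    using measure_thickening_tendsto[OF \<open>borel_prob \<nu>\<close>, of B] \<open>closed B\<close> by (simp add: closure_closed)
  then have "eventually (\<lambda>m. measure \<nu> (thickening B (1 / Suc m)) < \<epsilon>) sequentially"
    using \<open>\<epsilon> > 0\<close> by (rule order_tendstoD(2))
  then obtain m where m: "measure \<nu> (thickening B (1 / Suc m)) < \<epsilon>"
    using eventually_happens'[OF sequentially_bot] by blast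
  have "eventually (\<lambda>i. \<epsilon> \<le> measure ((\<mu> \<circ> (nn \<circ> r)) i) (thickening B (1 / Suc (Suc m)))) sequentially"
    unfolding eventually_sequentially
  proof (intro exI[of _ "Suc m"] allI impI)
    fix i assume "Suc m \<le> i"
    then have "1 / Suc (r i) \<le> 1 / (Suc (Suc m) :: real)"
      using seq_suble[OF \<open>strict_mono r\<close>, of i] by (simp add: frac_le)
    then have "measure (\<mu> (nn (r i))) (thickening B (1 / Suc (r i)))
        \<le> measure (\<mu> (nn (r i))) (thickening B (1 / Suc (Suc m)))"
      by (rule measure_thickening_mono[OF prob])
    then show "\<epsilon> \<le> measure ((\<mu> \<circ> (nn \<circ> r)) i) (thickening B (1 / Suc (Suc m)))"
      using nn[of "r i"] by simp
  qed
  moreover have "1 / Suc (Suc m) < 1 / (Suc m :: real)"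
    by (simp add: frac_less2)
  ultimately have "\<epsilon> \<le> measure \<nu> (thickening B (1 / Suc m))"
    using weakly_converges_thickening_le[OF _ \<open>borel_prob \<nu>\<close> conv \<open>B \<noteq> {}\<close>] prob by simp
  with m show False
    by linarith
qed

lemma misiurewicz_class_const_partition:
  fixes \<mu> :: "nat \<Rightarrow> 'a::metric_space measure"
  assumes cpt: "compact (UNIV :: 'a set)" and prob: "\<And>n. borel_prob (\<mu> n)"
    and partition: "borel_partition k P"
    and thin: "\<And>\<epsilon>. \<epsilon> > 0 \<Longrightarrow> \<exists>t>0. \<forall>i<k. \<forall>n. measure (\<mu> n) (thickening (frontier (P i)) t) \<le> \<epsilon>"
  shows "((\<lambda>_. k), (\<lambda>_. P)) \<in> misiurewicz_class \<mu>"
  unfolding misiurewicz_class_def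
proof (intro CollectI, unfold case_prod_conv, intro conjI allI impI)
  show "borel_partition k P" "bdd_above (range (\<lambda>_. k))"
    using partition by simp_all
  fix \<epsilon> :: real assume "\<epsilon> > 0"
  then obtain t where "t > 0" and t: "\<forall>i<k. \<forall>n. measure (\<mu> n) (thickening (frontier (P i)) t) \<le> \<epsilon>"
    using thin by blast
  define C where "C i = P i - thickening (frontier (P i)) t" for i
  have C_compact: "compact (C i)" for i
    using compact_Int_closed[OF cpt closed_Diff_open_frontier[OF open_thickening subset_thickening[OF \<open>t > 0\<close>]]]
    by (simp add: C_def)
  have C_sub: "C i \<subseteq> P i" for i
    by (simp add: C_def)
  have C_small: "measure (\<mu> n) (P i - C i) \<le> \<epsilon>" if "i < k" for i n
  proof -
    interpret prob_space "\<mu> n"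
      using prob by (simp add: borel_prob_def)
    have "measure (\<mu> n) (P i - C i) \<le> measure (\<mu> n) (thickening (frontier (P i)) t)"
      by (rule finite_measure_mono[OF _ borel_prob_thickening[OF prob]]) (auto simp: C_def)
    then show ?thesis
      using t that by (meson order_trans)
  qed
  have "C i \<inter> C j = {}" if "i < k" "j < k" "i \<noteq> j" for i j
    using partition that C_sub unfolding borel_partition_def by blast
  then obtain \<delta> where "\<delta> > 0" and \<delta>: "\<forall>i<k. \<forall>j<k. i \<noteq> j \<longrightarrow> (\<forall>x\<in>C i. \<forall>y\<in>C j. \<delta> \<le> dist x y)"
    using compact_family_uniform_separation[of k C] C_compact by blast
  show "\<exists>\<delta>>0. \<exists>C. \<forall>n. \<forall>i<k. compact (C n i) \<and> C n i \<subseteq> P i \<and> measure (\<mu> n) (P i - C n i) \<le> \<epsilon> \<and>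
      (\<forall>j<k. i \<noteq> j \<longrightarrow> (\<forall>x\<in>C n i. \<forall>y\<in>C n j. \<delta> \<le> dist x y))"
    using \<open>\<delta> > 0\<close> C_compact C_sub C_small \<delta>
    by (intro exI[of _ \<delta>] conjI exI[of _ "\<lambda>_::nat. C"] allI impI) auto
qed

theorem mainTheorem17:
  fixes f :: "nat \<Rightarrow> 'a::metric_space \<Rightarrow> 'a"
    and \<mu> :: "nat \<Rightarrow> 'a measure"
    and k :: nat and P :: "nat \<Rightarrow> 'a set"
  assumes "compact (UNIV :: 'a set)"
    and "\<And>n. continuous_on UNIV (f n)"
    and "equicontinuous_seq f"
    and "\<And>n. borel_prob (\<mu> n)"
    and "\<And>n. distr (\<mu> n) borel (f n) = \<mu> (Suc n)"
    and "\<And>\<nu> \<nu>'. \<nu> \<in> weak_star_closure \<mu> \<Longrightarrow> \<nu>' \<in> weak_star_closure \<mu> \<Longrightarrow>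
           absolutely_continuous \<nu> \<nu>'"
    and "borel_partition k P"
    and "\<And>n i. i < k \<Longrightarrow> emeasure (\<mu> n) (frontier (P i)) = 0"
  shows "((\<lambda>_. k), (\<lambda>_. P)) \<in> misiurewicz_class \<mu>"
proof (rule misiurewicz_class_const_partition[OF assms(1,4,7)])
  fix \<epsilon> :: real assume "\<epsilon> > 0"
  define small where "small i t \<longleftrightarrow> (\<forall>n. measure (\<mu> n) (thickening (frontier (P i)) t) \<le> \<epsilon>)" for i t
  have "\<exists>t>0. small i t" if "i < k" for i
    unfolding small_def
  proof (rule thickening_uniformly_small[OF assms(1,4) frontier_closed _ \<open>\<epsilon> > 0\<close>])
    fix \<nu> assume "\<nu> \<in> weak_star_closure \<mu>"
    then show "emeasure \<nu> (frontier (P i)) = 0"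
      by (intro weak_star_closure_null[of \<mu> 0 "frontier (P i)" \<nu>, OF assms(6) assms(4) _ assms(8)[OF that]]) simp_all
  qed
  moreover have "small i t'" if "small i t" "t' \<le> t" for i t t'
    using that measure_thickening_mono[OF assms(4) \<open>t' \<le> t\<close>] unfolding small_def by (meson order_trans)
  ultimately obtain t where "t > 0" "\<forall>i\<in>{..<k}. small i t"
    using finite_uniform_pos_bound[OF finite_lessThan, of k small] by blast
  then show "\<exists>t>0. \<forall>i<k. \<forall>n. measure (\<mu> n) (thickening (frontier (P i)) t) \<le> \<epsilon>"
    unfolding small_def by blast
qed

end
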